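(* Let $H$ be an ideal geometric-value hash function with parameter $\frac{\gamma}{1+\gamma}$, and let the hash key $\zeta_i$ be drawn uniformly and be unknown to the adversary. In the procedure $\textsf{DPFMPS-Gen}$ (described in the context), for each fixed $i\in[M]$, the output row $\boldsymbol{A}_i=(\boldsymbol{A}_{i,1},\ldots,\boldsymbol{A}_{i,k'})$ (one set of partition sketches), viewed as a randomized function of the local dataset, is $\epsilon'$-differentially private, where $\epsilon'=\frac{\epsilon_2}{4\sqrt{M\log(1/\delta_2)}}$.
   Context: Differential privacy: a randomized algorithm $\mathcal{A}$ is $\epsilon$-DP if for all pairs of datasets $\mathbf{X},\mathbf{X}'$ differing in one user record (one user added or removed) and all sets $O$ of outputs, $\Pr[\mathcal{A}(\mathbf{X})\in O]\le e^{\epsilon}\Pr[\mathcal{A}(\mathbf{X}')\in O]$. A random variable $Y\sim\mathrm{Geometric}(p)$ takes values in $\{1,2,\ldots\}$ with $\Pr[Y\le z]=1-(1-p)^z$. An ideal geometric-value hash function $H:\mathcal{X}\times\mathbb{Z}\to\mathbb{N}_+$ with parameter $\frac{\gamma}{1+\gamma}$ ($\gamma>0$) is one such that, for a uniformly drawn key $\zeta$, for any finite set of distinct inputs $x_1,\ldots,x_t$ the values $H_\zeta(x_1),\ldots,H_\zeta(x_t)$ are i.i.d. $\mathrm{Geometric}(\frac{\gamma}{1+\gamma})$. Procedure $\mathtt{DPFM}(\mathcal{M},\epsilon',\gamma,\zeta)$ on a set $\mathcal{M}$ of user ids: set $n_p=\lceil 1/(e^{\epsilon'}-1)\rceil$ and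 $\alpha_{\min}=\lceil\log_{1+\gamma}\frac{1}{1-e^{-\epsilon'}}\rceil$; let $\alpha_p=\max\{Y_1,\ldots,Y_{n_p}\}$ with $Y_j$ fresh i.i.d. $\mathrm{Geometric}(\frac{\gamma}{1+\gamma})$; let $\alpha_{real}=\max\{H_\zeta(\mathtt{id}):\mathtt{id}\in\mathcal{M}\}$; return $\max\{\alpha_p,\alpha_{real},\alpha_{\min}\}$. Procedure $\textsf{DPFMPS-Gen}$ with inputs: local dataset $\mathbf{X}^{(\ell)}$ of records $x^{(\ell)}_{\mathtt{id}}$ indexed by user ids, a given set of centers $\{c^{(\ell)}_1,\ldots,c^{(\ell)}_{k'}\}$ (not depending on the protected data), parameters $\epsilon_2,\delta_2,\gamma,M$ and keys $\zeta_1,\ldots,\zeta_M$. It sets $\epsilon'=\frac{\epsilon_2}{4\sqrt{M\log(1/\delta_2)}}$, partitions user ids into $\mathcal{M}^{(\ell)}_1,\ldots,\mathcal{M}^{(\ell)}_{k'}$ with $\mathtt{id}\in\mathcal{M}^{(\ell)}_a$ iff $a=\arg\min_j\|x^{(\ell)}_{\mathtt{id}}-c^{(\ell)}_j\|_2^2$, and sets $\boldsymbol{A}_{i,a}=\mathtt{DPFM}(\mathcal{M}^{(\ell)}_a,\epsilon',\gamma,\zeta_i)$ for $i\in[M]$, $a\in[k']$. *)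

theory Defs
  imports "HOL-Probability.Probability"
begin

definition geom_pos :: "real \<Rightarrow> nat pmf" where
  "geom_pos \<gamma> = map_pmf Suc (geometric_pmf (\<gamma> / (1 + \<gamma>)))"

definition ideal_geo_hash :: "'k measure \<Rightarrow> ('k \<Rightarrow> 'id \<Rightarrow> nat) \<Rightarrow> real \<Rightarrow> bool" where
  "ideal_geo_hash K H \<gamma> \<longleftrightarrow>
     prob_space K \<and>
     (\<forall>x n. {\<zeta> \<in> space K. H \<zeta> x = n} \<in> sets K) \<and>
     (\<forall>S f. finite S \<longrightarrow>
        measure K {\<zeta> \<in> space K. \<forall>x\<in>S. H \<zeta> x = f x} = (\<Prod>x\<in>S. pmf (geom_pos \<gamma>) (f x)))"

definition n_p :: "real \<Rightarrow> nat" where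
  "n_p \<epsilon>' = nat \<lceil>1 / (exp \<epsilon>' - 1)\<rceil>"

definition alpha_min :: "real \<Rightarrow> real \<Rightarrow> nat" where
  "alpha_min \<gamma> \<epsilon>' = nat \<lceil>log (1 + \<gamma>) (1 / (1 - exp (- \<epsilon>')))\<rceil>"

definition alpha_p_pmf :: "real \<Rightarrow> real \<Rightarrow> nat pmf" where
  "alpha_p_pmf \<epsilon>' \<gamma> =
     map_pmf (\<lambda>Y. Max (Y ` {..<n_p \<epsilon>'})) (Pi_pmf {..<n_p \<epsilon>'} 0 (\<lambda>_. geom_pos \<gamma>))"

text \<open>DPFM on id set Ms, given key zeta and the already drawn alpha_p
  (alpha_real over an empty set is taken as 0, which is dominated by alpha_min \<ge> 1).\<close>
definition DPFM :: "('k \<Rightarrow> 'id \<Rightarrow> nat) \<Rightarrow> 'id set \<Rightarrow> real \<Rightarrow> real \<Rightarrow> 'k \<Rightarrow> nat \<Rightarrow> nat" where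
  "DPFM H Ms \<epsilon>' \<gamma> \<zeta> \<alpha>p = max (max \<alpha>p (Max (insert 0 (H \<zeta> ` Ms)))) (alpha_min \<gamma> \<epsilon>')"

definition nearest :: "(nat \<Rightarrow> 'a::euclidean_space) \<Rightarrow> nat \<Rightarrow> 'a \<Rightarrow> nat" where
  "nearest c k' x = (LEAST a. a < k' \<and> (\<forall>j<k'. (norm (x - c a))\<^sup>2 \<le> (norm (x - c j))\<^sup>2))"

definition part_set :: "('id \<rightharpoonup> 'a::euclidean_space) \<Rightarrow> (nat \<Rightarrow> 'a) \<Rightarrow> nat \<Rightarrow> nat \<Rightarrow> 'id set" where
  "part_set X c k' a = {i \<in> dom X. nearest c k' (the (X i)) = a}"

definition DPFMPS_row :: "'k measure \<Rightarrow> ('k \<Rightarrow> 'id \<Rightarrow> nat) \<Rightarrow> real \<Rightarrow> real \<Rightarrow>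
    (nat \<Rightarrow> 'a::euclidean_space) \<Rightarrow> nat \<Rightarrow> ('id \<rightharpoonup> 'a) \<Rightarrow> nat list measure" where
  "DPFMPS_row K H \<gamma> \<epsilon>' c k' X =
     distr (K \<Otimes>\<^sub>M measure_pmf (Pi_pmf {..<k'} 0 (\<lambda>_. alpha_p_pmf \<epsilon>' \<gamma>))) (count_space UNIV)
       (\<lambda>(\<zeta>, A). map (\<lambda>a. DPFM H (part_set X c k' a) \<epsilon>' \<gamma> \<zeta> (A a)) [0..<k'])"

definition eps_prime :: "real \<Rightarrow> real \<Rightarrow> nat \<Rightarrow> real" where
  "eps_prime \<epsilon>2 \<delta>2 M = \<epsilon>2 / (4 * sqrt (real M * ln (1 / \<delta>2)))"

definition neighbours :: "('id \<rightharpoonup> 'r) \<Rightarrow> ('id \<rightharpoonup> 'r) \<Rightarrow> bool" where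
  "neighbours X X' \<longleftrightarrow> (\<exists>i r. (i \<notin> dom X \<and> X' = X(i \<mapsto> r)) \<or> (i \<notin> dom X' \<and> X = X'(i \<mapsto> r)))"

definition eps_DP :: "(('id \<rightharpoonup> 'r) \<Rightarrow> 'o measure) \<Rightarrow> real \<Rightarrow> bool" where
  "eps_DP A \<epsilon> \<longleftrightarrow> (\<forall>X X' S. finite (dom X) \<and> finite (dom X') \<and> neighbours X X' \<longrightarrow>
       measure (A X) S \<le> exp \<epsilon> * measure (A X') S)"

end

theory Submission
  imports Defs
begin

(* Fix neighbouring datasets X and X(u \<mapsto> r) and let a be the partition of r. As the key is
   uniform and unknown, the hash values of the finitely many users are i.i.d. geometric, so both
   rows are the same mixture, over the hash values of the other users and the noise of the other
   partitions, of a kernel that changes only entry a: that entry is max(\<alpha>p, m) for X and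
   max(\<alpha>p, W, m) for X(u \<mapsto> r), where W is the hash of u and m \<ge> \<alpha>min collects the rest.
   If F is the geometric CDF, \<alpha>p has CDF F^n with n = n_p and max(\<alpha>p, W) has CDF F^(n+1).
   Hence the point masses of max(-, m) differ at most by the factor 1 + 1/n \<le> e^\<epsilon>' in one
   direction and by 1/F(m) \<le> 1/F(\<alpha>min) \<le> e^\<epsilon>' in the other. *)

lemma power_Suc_diff_le:
  fixes s t :: real
  assumes "0 \<le> s" "s \<le> t" "t \<le> 1" "n \<ge> 1"
  shows "t ^ Suc n - s ^ Suc n \<le> (1 + 1 / n) * (t ^ n - s ^ n)"
proof -
  have "real n * s ^ n \<le> (\<Sum>i<n. s ^ (n - Suc i) * t ^ i)"
  proof -
    have "s ^ n \<le> s ^ (n - Suc i) * t ^ i" if "i < n" for i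
    proof -
      have "s ^ n \<le> s ^ (n - Suc i + i)"
        using assms that by (intro power_decreasing) auto
      also have "\<dots> \<le> s ^ (n - Suc i) * t ^ i"
        using assms by (simp add: power_add mult_left_mono power_mono)
      finally show ?thesis .
    qed
    then show ?thesis using sum_bounded_below[of "{..<n}" "s ^ n"] by simp
  qed
  then have "real n * s ^ n * (t - s) \<le> t ^ n - s ^ n"
    using assms mult_right_mono by (fastforce simp: power_diff_sumr2[of t n s] mult.commute)
  then have tail: "s ^ n * (t - s) \<le> (t ^ n - s ^ n) / n"
    using assms by (simp add: field_simps)
  have gap: "0 \<le> t ^ n - s ^ n"
    using assms by (simp add: power_mono)
  have "t ^ Suc n - s ^ Suc n = t * (t ^ n - s ^ n) + s ^ n * (t - s)"
    by (simp add: algebra_simps)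
  also have "\<dots> \<le> (t ^ n - s ^ n) + (t ^ n - s ^ n) / n"
    using assms gap tail by (intro add_mono mult_left_le_one_le) auto
  also have "\<dots> = (1 + 1 / n) * (t ^ n - s ^ n)"
    by (simp add: distrib_right)
  finally show ?thesis .
qed

lemma power_diff_le_Suc:
  fixes s t :: real
  assumes "0 \<le> s" "s \<le> t"
  shows "t * (t ^ n - s ^ n) \<le> t ^ Suc n - s ^ Suc n"
proof -
  have "t ^ Suc n - s ^ Suc n = t * (t ^ n - s ^ n) + s ^ n * (t - s)"
    by (simp add: algebra_simps)
  moreover have "0 \<le> s ^ n * (t - s)"
    using assms by simp
  ultimately show ?thesis by simp
qed

lemma prob_geometric_pmf_lessThan:
  assumes "0 < p" "p \<le> 1"
  shows "measure_pmf.prob (geometric_pmf p) {..<n} = 1 - (1 - p) ^ n"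
proof -
  have "(\<Sum>k<n. (1 - p) ^ k * p) = 1 - (1 - p) ^ n"
    by (induction n) (simp_all add: algebra_simps)
  then show ?thesis
    using assms by (simp add: measure_measure_pmf_finite)
qed

lemma prob_Max_Pi_pmf_atMost:
  fixes p :: "'b::linorder pmf"
  assumes "finite I" "I \<noteq> {}"
  shows "measure_pmf.prob (map_pmf (\<lambda>Y. Max (Y ` I)) (Pi_pmf I d (\<lambda>_. p))) {..v} =
         measure_pmf.prob p {..v} ^ card I"
proof -
  have "Max (Y ` I) \<le> v \<longleftrightarrow> (\<forall>x\<in>I. Y x \<le> v)" for Y
    using assms by (subst Max_le_iff) auto
  then have "(\<lambda>Y. Max (Y ` I)) -` {..v} = Pi I (\<lambda>_. {..v})"
    by (auto simp: Pi_def)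
  then show ?thesis
    using assms by (simp add: measure_Pi_pmf_Pi)
qed

lemma prob_max_pair_pmf_atMost:
  fixes p q :: "'b::{linorder,countable} pmf"
  shows "measure_pmf.prob (map_pmf (\<lambda>(a, b). max a b) (pair_pmf p q)) {..v} =
         measure_pmf.prob p {..v} * measure_pmf.prob q {..v}"
proof -
  have "(\<lambda>(a, b). max a b) -` {..v} = {..v} \<times> {..v}"
    by auto
  then show ?thesis
    by (simp add: measure_pmf_prob_product)
qed

lemma pmf_map_max_const:
  fixes p :: "nat pmf"
  shows "pmf (map_pmf (\<lambda>x. max x m) p) v =
         (if v < m then 0
          else measure_pmf.prob p {..v} - (if v = m then 0 else measure_pmf.prob p {..v - 1}))"
proof -
  consider "v < m" | "v = m" | "m < v"
    by linarith
  then show ?thesis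
  proof cases
    case 1
    then have "(\<lambda>x. max x m) -` {v} = {}" by auto
    then show ?thesis using 1 by (simp add: pmf_map)
  next
    case 2
    then have "(\<lambda>x. max x m) -` {v} = {..v}" by auto
    then show ?thesis using 2 by (simp add: pmf_map)
  next
    case 3
    then have "(\<lambda>x. max x m) -` {v} = {v}" and split: "{..v} = {..v - 1} \<union> {v}"
      by auto
    have "measure_pmf.prob p {..v} = measure_pmf.prob p {..v - 1} + pmf p v"
      unfolding split using 3
      by (subst measure_pmf.finite_measure_Union) (auto simp: measure_pmf_single)
    then show ?thesis
      using 3 \<open>(\<lambda>x. max x m) -` {v} = {v}\<close> by (simp add: pmf_map measure_pmf_single)
  qed
qed

lemma pmf_map_max_const_cdf_power_le:
  fixes p q :: "nat pmf" and F :: "nat \<Rightarrow> real"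
  assumes cdf_p: "\<And>v. measure_pmf.prob p {..v} = F v ^ n"
    and cdf_q: "\<And>v. measure_pmf.prob q {..v} = F v ^ Suc n"
    and F: "mono F" "\<And>v. 0 \<le> F v" "\<And>v. F v \<le> 1"
    and n: "n \<ge> 1" "1 + 1 / n \<le> E"
    and m: "1 \<le> E * F m"
  shows "pmf (map_pmf (\<lambda>x. max x m) q) v \<le> E * pmf (map_pmf (\<lambda>x. max x m) p) v"
    and "pmf (map_pmf (\<lambda>x. max x m) p) v \<le> E * pmf (map_pmf (\<lambda>x. max x m) q) v"
proof -
  have "pmf (map_pmf (\<lambda>x. max x m) q) v \<le> E * pmf (map_pmf (\<lambda>x. max x m) p) v \<and>
        pmf (map_pmf (\<lambda>x. max x m) p) v \<le> E * pmf (map_pmf (\<lambda>x. max x m) q) v"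
  proof (cases "v < m")
    case True
    then show ?thesis by (simp add: pmf_map_max_const)
  next
    case False
    define t where "t = F v"
    (* at v = m the atom carries all the mass below m, so nothing is subtracted *)
    define s where "s = (if v = m then 0 else F (v - 1))"
    have pmf_p: "pmf (map_pmf (\<lambda>x. max x m) p) v = t ^ n - s ^ n"
      and pmf_q: "pmf (map_pmf (\<lambda>x. max x m) q) v = t ^ Suc n - s ^ Suc n"
      using False n(1) by (simp_all add: pmf_map_max_const cdf_p cdf_q t_def s_def)
    have st: "0 \<le> s" "s \<le> t" "t \<le> 1"
      using F by (auto simp: s_def t_def mono_def)
    have E: "0 \<le> E"
      using n(2) divide_nonneg_nonneg[of 1 "real n"] by linarith
    have "F m \<le> t"
      using F(1) False by (simp add: t_def mono_def)
    then have Et: "1 \<le> E * t"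
      using m mult_left_mono[OF _ E] by (meson order_trans)
    have gap: "0 \<le> t ^ n - s ^ n"
      using st by (simp add: power_mono)
    have "t ^ Suc n - s ^ Suc n \<le> (1 + 1 / n) * (t ^ n - s ^ n)"
      using power_Suc_diff_le st n(1) .
    also have "\<dots> \<le> E * (t ^ n - s ^ n)"
      using n(2) gap by (rule mult_right_mono)
    finally have up: "t ^ Suc n - s ^ Suc n \<le> E * (t ^ n - s ^ n)" .
    have "t ^ n - s ^ n \<le> E * (t * (t ^ n - s ^ n))"
      using mult_right_mono[OF Et gap] by (simp add: mult.assoc)
    also have "\<dots> \<le> E * (t ^ Suc n - s ^ Suc n)"
      using power_diff_le_Suc[OF st(1,2)] E by (rule mult_left_mono)
    finally show ?thesis
      using up by (simp add: pmf_p pmf_q)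
  qed
  then show "pmf (map_pmf (\<lambda>x. max x m) q) v \<le> E * pmf (map_pmf (\<lambda>x. max x m) p) v"
    and "pmf (map_pmf (\<lambda>x. max x m) p) v \<le> E * pmf (map_pmf (\<lambda>x. max x m) q) v"
    by auto
qed

lemma measure_pmf_le_if_pmf_le:
  assumes "\<And>x. pmf p x \<le> c * pmf q x" "0 \<le> c"
  shows "measure_pmf.prob p S \<le> c * measure_pmf.prob q S"
proof -
  have "emeasure p S = (\<integral>\<^sup>+x. ennreal (pmf p x) * indicator S x \<partial>count_space UNIV)"
    by (subst nn_integral_indicator[symmetric]) (auto simp: nn_integral_measure_pmf)
  also have "\<dots> \<le> (\<integral>\<^sup>+x. ennreal c * (ennreal (pmf q x) * indicator S x) \<partial>count_space UNIV)"
    using assms by (intro nn_integral_mono)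
      (auto simp: indicator_def ennreal_mult[symmetric] intro!: ennreal_leI)
  also have "\<dots> = ennreal c * (\<integral>\<^sup>+x. ennreal (pmf q x) * indicator S x \<partial>count_space UNIV)"
    by (rule nn_integral_cmult) auto
  also have "(\<integral>\<^sup>+x. ennreal (pmf q x) * indicator S x \<partial>count_space UNIV) = emeasure q S"
    by (subst nn_integral_indicator[symmetric]) (auto simp: nn_integral_measure_pmf)
  finally show ?thesis
    using assms(2) by (simp add: measure_pmf.emeasure_eq_measure ennreal_mult[symmetric])
qed

lemma measure_bind_pmf_le:
  assumes "\<And>z. measure_pmf.prob (K1 z) S \<le> c * measure_pmf.prob (K2 z) S" "0 \<le> c"
  shows "measure_pmf.prob (bind_pmf Z K1) S \<le> c * measure_pmf.prob (bind_pmf Z K2) S"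
proof -
  have "emeasure (bind_pmf Z K1) S = (\<integral>\<^sup>+z. emeasure (K1 z) S \<partial>Z)"
    by simp
  also have "\<dots> \<le> (\<integral>\<^sup>+z. ennreal c * emeasure (K2 z) S \<partial>Z)"
    using assms by (intro nn_integral_mono)
      (simp add: measure_pmf.emeasure_eq_measure ennreal_mult[symmetric])
  also have "\<dots> = ennreal c * emeasure (bind_pmf Z K2) S"
    by (simp add: nn_integral_cmult)
  finally show ?thesis
    using assms(2) by (simp add: measure_pmf.emeasure_eq_measure ennreal_mult[symmetric])
qed

lemma map_eq_iff_map_of_zip:
  assumes "distinct xs" "length ys = length xs"
  shows "map h xs = ys \<longleftrightarrow> (\<forall>x\<in>set xs. h x = the (map_of (zip xs ys) x))"
proof -
  define g where "g x = the (map_of (zip xs ys) x)" for x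
  have "ys = map g xs"
    using assms by (intro nth_equalityI) (simp_all add: g_def map_of_zip_nth)
  then have "map h xs = ys \<longleftrightarrow> map h xs = map g xs"
    by simp
  also have "\<dots> \<longleftrightarrow> (\<forall>x\<in>set xs. h x = g x)"
    by (rule map_eq_conv)
  finally show ?thesis
    by (simp add: g_def)
qed

lemma distr_pair_measure_pmf:
  fixes g :: "'k \<Rightarrow> 'b::countable" and \<Phi> :: "'b \<Rightarrow> 'c \<Rightarrow> 'd::countable"
  assumes g: "g \<in> K \<rightarrow>\<^sub>M count_space UNIV"
    and law: "distr K (count_space UNIV) g = measure_pmf Q"
  shows "distr (K \<Otimes>\<^sub>M measure_pmf P) (count_space UNIV) (\<lambda>(\<zeta>, A). \<Phi> (g \<zeta>) A) =
         measure_pmf (map_pmf (\<lambda>(y, A). \<Phi> y A) (pair_pmf Q P))"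
proof (rule measure_eqI_countable[where A=UNIV])
  let ?f = "\<lambda>(\<zeta>, A). \<Phi> (g \<zeta>) A"
  have f: "?f \<in> K \<Otimes>\<^sub>M measure_pmf P \<rightarrow>\<^sub>M count_space UNIV"
  proof -
    have "(\<lambda>p. \<Phi> (g (fst p)) (snd p)) \<in> K \<Otimes>\<^sub>M measure_pmf P \<rightarrow>\<^sub>M count_space UNIV"
    proof (rule measurable_compose_countable[where f="\<lambda>y p. \<Phi> y (snd p)"])
      show "(\<lambda>p. g (fst p)) \<in> K \<Otimes>\<^sub>M measure_pmf P \<rightarrow>\<^sub>M count_space UNIV"
        using g by measurable
      show "(\<lambda>p. \<Phi> y (snd p)) \<in> K \<Otimes>\<^sub>M measure_pmf P \<rightarrow>\<^sub>M count_space UNIV" for y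
        by (rule measurable_compose[OF measurable_snd]) simp
    qed
    then show ?thesis
      by (simp add: case_prod_beta')
  qed
  fix l :: 'd
  have "emeasure (distr (K \<Otimes>\<^sub>M measure_pmf P) (count_space UNIV) ?f) {l} =
        emeasure (K \<Otimes>\<^sub>M measure_pmf P) (?f -` {l} \<inter> space (K \<Otimes>\<^sub>M measure_pmf P))"
    using f by (simp add: emeasure_distr)
  also have "\<dots> = (\<integral>\<^sup>+\<zeta>. emeasure P (Pair \<zeta> -` (?f -` {l} \<inter> space (K \<Otimes>\<^sub>M measure_pmf P))) \<partial>K)"
    using f by (intro measure_pmf.emeasure_pair_measure_alt) (simp add: measurable_sets)
  also have "\<dots> = (\<integral>\<^sup>+\<zeta>. emeasure P {A. \<Phi> (g \<zeta>) A = l} \<partial>K)"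
    by (intro nn_integral_cong arg_cong[where f="emeasure P"]) (auto simp: space_pair_measure)
  also have "\<dots> = (\<integral>\<^sup>+y. emeasure P {A. \<Phi> y A = l} \<partial>distr K (count_space UNIV) g)"
    using g by (simp add: nn_integral_distr)
  also have "\<dots> = (\<integral>\<^sup>+y. \<integral>\<^sup>+A. indicator ((\<lambda>(y, A). \<Phi> y A) -` {l}) (y, A) \<partial>P \<partial>Q)"
  proof -
    have "(\<lambda>A. indicator ((\<lambda>(y, A). \<Phi> y A) -` {l}) (y, A)) =
        (indicator {A. \<Phi> y A = l} :: _ \<Rightarrow> ennreal)" for y
      by (auto split: split_indicator)
    then show ?thesis
      unfolding law by simp
  qed
  also have "\<dots> = (\<integral>\<^sup>+x. indicator ((\<lambda>(y, A). \<Phi> y A) -` {l}) x \<partial>pair_pmf Q P)"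
    by (rule nn_integral_pair_pmf'[symmetric])
  also have "\<dots> = emeasure (map_pmf (\<lambda>(y, A). \<Phi> y A) (pair_pmf Q P)) {l}"
    by (subst nn_integral_indicator) auto
  finally show "emeasure (distr (K \<Otimes>\<^sub>M measure_pmf P) (count_space UNIV) ?f) {l} =
                emeasure (map_pmf (\<lambda>(y, A). \<Phi> y A) (pair_pmf Q P)) {l}" .
qed auto

lemma prob_geom_pos_atMost:
  assumes "\<gamma> > 0"
  shows "measure_pmf.prob (geom_pos \<gamma>) {..v} = 1 - (1 / (1 + \<gamma>)) ^ v"
proof -
  have "Suc -` {..v} = {..<v}"
    by auto
  moreover have "1 - \<gamma> / (1 + \<gamma>) = 1 / (1 + \<gamma>)"
    using assms by (simp add: field_simps)
  ultimately show ?thesis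
    using assms by (simp add: geom_pos_def prob_geometric_pmf_lessThan)
qed

lemma n_p_bounds:
  assumes "e > 0"
  shows "n_p e \<ge> 1" and "1 + 1 / n_p e \<le> exp e"
proof -
  have gap: "exp e - 1 > 0"
    using assms by simp
  have bound: "1 / (exp e - 1) \<le> n_p e"
    unfolding n_p_def by linarith
  moreover have "1 / (exp e - 1) > 0"
    using gap by simp
  ultimately have pos: "real (n_p e) > 0"
    by linarith
  then show "n_p e \<ge> 1"
    by simp
  have "1 / n_p e \<le> exp e - 1"
    using bound gap pos by (simp add: field_simps)
  then show "1 + 1 / n_p e \<le> exp e"
    by simp
qed

lemma exp_minus_le_prob_geom_pos_alpha_min:
  assumes "\<gamma> > 0" "e > 0"
  shows "exp (- e) \<le> measure_pmf.prob (geom_pos \<gamma>) {..alpha_min \<gamma> e}"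
proof -
  let ?L = "log (1 + \<gamma>) (1 / (1 - exp (- e)))"
  have small: "exp (- e) < 1"
    using assms by simp
  have "?L \<le> alpha_min \<gamma> e"
    unfolding alpha_min_def by linarith
  then have "(1 + \<gamma>) powr ?L \<le> (1 + \<gamma>) powr alpha_min \<gamma> e"
    using assms by (intro powr_mono) auto
  moreover have "(1 + \<gamma>) powr ?L = 1 / (1 - exp (- e))"
    using assms small by simp
  ultimately have "1 / (1 - exp (- e)) \<le> (1 + \<gamma>) ^ alpha_min \<gamma> e"
    using assms by (simp add: powr_realpow)
  then have "(1 / (1 + \<gamma>)) ^ alpha_min \<gamma> e \<le> 1 - exp (- e)"
    using assms small by (simp add: power_one_over field_simps)
  then show ?thesis
    using assms by (simp add: prob_geom_pos_atMost)
qed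

definition alpha_p_max_geom_pmf :: "real \<Rightarrow> real \<Rightarrow> nat pmf" where
  "alpha_p_max_geom_pmf e \<gamma> = map_pmf (\<lambda>(a, w). max a w) (pair_pmf (alpha_p_pmf e \<gamma>) (geom_pos \<gamma>))"

lemma pmf_map_max_alpha_p_le:
  assumes "\<gamma> > 0" "e > 0" "alpha_min \<gamma> e \<le> m"
  shows "pmf (map_pmf (\<lambda>x. max x m) (alpha_p_max_geom_pmf e \<gamma>)) v
           \<le> exp e * pmf (map_pmf (\<lambda>x. max x m) (alpha_p_pmf e \<gamma>)) v"
    and "pmf (map_pmf (\<lambda>x. max x m) (alpha_p_pmf e \<gamma>)) v
           \<le> exp e * pmf (map_pmf (\<lambda>x. max x m) (alpha_p_max_geom_pmf e \<gamma>)) v"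
proof -
  define F where "F v = measure_pmf.prob (geom_pos \<gamma>) {..v}" for v
  have cdf_p: "measure_pmf.prob (alpha_p_pmf e \<gamma>) {..v} = F v ^ n_p e" for v
    using prob_Max_Pi_pmf_atMost[where I="{..<n_p e}" and p="geom_pos \<gamma>" and d=0] n_p_bounds[OF assms(2)]
    by (simp add: alpha_p_pmf_def F_def lessThan_empty_iff)
  have cdf_q: "measure_pmf.prob (alpha_p_max_geom_pmf e \<gamma>) {..v} = F v ^ Suc (n_p e)" for v
    using prob_max_pair_pmf_atMost[where p="alpha_p_pmf e \<gamma>" and q="geom_pos \<gamma>"]
    by (simp add: alpha_p_max_geom_pmf_def cdf_p F_def mult.commute)
  have mono: "mono F"
    unfolding F_def by (intro monoI measure_pmf.finite_measure_mono) auto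
  have bounds: "0 \<le> F v" "F v \<le> 1" for v
    by (simp_all add: F_def)
  have "exp (- e) \<le> F m"
    using exp_minus_le_prob_geom_pos_alpha_min[OF assms(1,2)] mono assms(3)
    unfolding F_def mono_def by (meson order_trans)
  then have "1 \<le> exp e * F m"
    by (simp add: exp_minus field_simps)
  note le = pmf_map_max_const_cdf_power_le[OF cdf_p cdf_q mono bounds n_p_bounds[OF assms(2)] this]
  show "pmf (map_pmf (\<lambda>x. max x m) (alpha_p_max_geom_pmf e \<gamma>)) v
          \<le> exp e * pmf (map_pmf (\<lambda>x. max x m) (alpha_p_pmf e \<gamma>)) v"
    and "pmf (map_pmf (\<lambda>x. max x m) (alpha_p_pmf e \<gamma>)) v
          \<le> exp e * pmf (map_pmf (\<lambda>x. max x m) (alpha_p_max_geom_pmf e \<gamma>)) v"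
    by (fact le(1), fact le(2))
qed

definition raise_entry :: "nat \<Rightarrow> nat list \<Rightarrow> nat \<Rightarrow> nat list" where
  "raise_entry a L v = L[a := max v (L ! a)]"

lemma measure_raise_entry_alpha_p_le:
  assumes "\<gamma> > 0" "e > 0" "alpha_min \<gamma> e \<le> L ! a"
  shows "measure_pmf.prob (map_pmf (raise_entry a L) (alpha_p_max_geom_pmf e \<gamma>)) S
           \<le> exp e * measure_pmf.prob (map_pmf (raise_entry a L) (alpha_p_pmf e \<gamma>)) S"
    and "measure_pmf.prob (map_pmf (raise_entry a L) (alpha_p_pmf e \<gamma>)) S
           \<le> exp e * measure_pmf.prob (map_pmf (raise_entry a L) (alpha_p_max_geom_pmf e \<gamma>)) S"
proof -
  have "raise_entry a L -` S = (\<lambda>x. max x (L ! a)) -` ((\<lambda>v. L[a := v]) -` S)"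
    by (auto simp: raise_entry_def)
  then show "measure_pmf.prob (map_pmf (raise_entry a L) (alpha_p_max_geom_pmf e \<gamma>)) S
           \<le> exp e * measure_pmf.prob (map_pmf (raise_entry a L) (alpha_p_pmf e \<gamma>)) S"
    and "measure_pmf.prob (map_pmf (raise_entry a L) (alpha_p_pmf e \<gamma>)) S
           \<le> exp e * measure_pmf.prob (map_pmf (raise_entry a L) (alpha_p_max_geom_pmf e \<gamma>)) S"
    using measure_pmf_le_if_pmf_le[OF pmf_map_max_alpha_p_le(1)[OF assms], of "(\<lambda>v. L[a := v]) -` S"]
      measure_pmf_le_if_pmf_le[OF pmf_map_max_alpha_p_le(2)[OF assms], of "(\<lambda>v. L[a := v]) -` S"]
    by simp_all
qed

lemma emeasure_ideal_geo_hash: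
  assumes "ideal_geo_hash K H \<gamma>" "finite S"
  shows "emeasure K {\<zeta> \<in> space K. \<forall>x\<in>S. H \<zeta> x = f x} =
         emeasure (Pi_pmf S 0 (\<lambda>_. geom_pos \<gamma>)) (Pi S (\<lambda>x. {f x}))"
proof -
  interpret K: prob_space K
    using assms(1) by (simp add: ideal_geo_hash_def)
  show ?thesis
    using assms by (simp add: K.emeasure_eq_measure measure_pmf.emeasure_eq_measure
        measure_Pi_pmf_Pi measure_pmf_single ideal_geo_hash_def)
qed

(* Lists of hash values, unlike hash functions, live in a countable type. *)
lemma ideal_geo_hash_values:
  assumes hash: "ideal_geo_hash K H \<gamma>" and xs: "distinct xs"
  shows "(\<lambda>\<zeta>. map (H \<zeta>) xs) \<in> K \<rightarrow>\<^sub>M count_space UNIV"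
    and "distr K (count_space UNIV) (\<lambda>\<zeta>. map (H \<zeta>) xs) =
         measure_pmf (map_pmf (\<lambda>h. map h xs) (Pi_pmf (set xs) 0 (\<lambda>_. geom_pos \<gamma>)))"
proof -
  define look where "look (ys :: nat list) x = the (map_of (zip xs ys) x)" for ys x
  have pre: "(\<lambda>\<zeta>. map (H \<zeta>) xs) -` {ys} \<inter> space K =
      (if length ys = length xs then {\<zeta> \<in> space K. \<forall>x\<in>set xs. H \<zeta> x = look ys x} else {})"
    and pre_pmf: "(\<lambda>h. map h xs) -` {ys} =
      (if length ys = length xs then Pi (set xs) (\<lambda>x. {look ys x}) else {})" for ys
    using map_eq_iff_map_of_zip[OF xs] by (auto simp: look_def Pi_def)
  have "{\<zeta> \<in> space K. \<forall>x\<in>set xs. H \<zeta> x = f x} \<in> sets K" for f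
    using hash by (intro sets.sets_Collect_finite_All) (auto simp: ideal_geo_hash_def)
  then show meas: "(\<lambda>\<zeta>. map (H \<zeta>) xs) \<in> K \<rightarrow>\<^sub>M count_space UNIV"
    unfolding measurable_count_space_eq2_countable using pre by simp
  show "distr K (count_space UNIV) (\<lambda>\<zeta>. map (H \<zeta>) xs) =
        measure_pmf (map_pmf (\<lambda>h. map h xs) (Pi_pmf (set xs) 0 (\<lambda>_. geom_pos \<gamma>)))"
  proof (rule measure_eqI_countable[where A=UNIV])
    fix ys :: "nat list"
    show "emeasure (distr K (count_space UNIV) (\<lambda>\<zeta>. map (H \<zeta>) xs)) {ys} =
          emeasure (map_pmf (\<lambda>h. map h xs) (Pi_pmf (set xs) 0 (\<lambda>_. geom_pos \<gamma>))) {ys}"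
      using meas emeasure_ideal_geo_hash[OF hash] by (simp add: emeasure_distr pre pre_pmf)
  qed simp_all
qed

lemma DPFM_cong:
  assumes "\<And>x. x \<in> P \<Longrightarrow> H z x = H' z' x"
  shows "DPFM H P e \<gamma> z \<alpha>p = DPFM H' P e \<gamma> z' \<alpha>p"
  using assms unfolding DPFM_def by (simp cong: image_cong)

definition sketch_row ::
    "('id \<Rightarrow> nat) \<Rightarrow> ('id \<rightharpoonup> 'a::euclidean_space) \<Rightarrow> (nat \<Rightarrow> 'a) \<Rightarrow> nat \<Rightarrow> real \<Rightarrow> real \<Rightarrow>
     (nat \<Rightarrow> nat) \<Rightarrow> nat list" where
  "sketch_row h X c k' e \<gamma> A = map (\<lambda>a. DPFM (\<lambda>_::unit. h) (part_set X c k' a) e \<gamma> () (A a)) [0..<k']"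

lemma sketch_row_cong:
  assumes "\<And>x. x \<in> dom X \<Longrightarrow> h x = h' x"
  shows "sketch_row h X c k' e \<gamma> A = sketch_row h' X c k' e \<gamma> A"
proof -
  have "DPFM (\<lambda>_::unit. h) (part_set X c k' a) e \<gamma> () \<alpha>p =
        DPFM (\<lambda>_::unit. h') (part_set X c k' a) e \<gamma> () \<alpha>p"
    for a \<alpha>p
    using assms by (intro DPFM_cong) (auto simp: part_set_def)
  then show ?thesis
    by (simp add: sketch_row_def)
qed

lemma DPFMPS_row_eq_sketch_row_pmf:
  assumes hash: "ideal_geo_hash K H \<gamma>" and "finite D" "dom X \<subseteq> D"
  shows "DPFMPS_row K H \<gamma> e c k' X =
    measure_pmf (map_pmf (\<lambda>(h, A). sketch_row h X c k' e \<gamma> A)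
      (pair_pmf (Pi_pmf D 0 (\<lambda>_. geom_pos \<gamma>)) (Pi_pmf {..<k'} 0 (\<lambda>_. alpha_p_pmf e \<gamma>))))"
proof -
  obtain xs where xs: "distinct xs" "set xs = D"
    using finite_distinct_list[OF assms(2)] by blast
  define \<Phi> where "\<Phi> ys A = sketch_row (\<lambda>x. the (map_of (zip xs ys) x)) X c k' e \<gamma> A" for ys A
  have \<Phi>_map: "\<Phi> (map h xs) A = sketch_row h X c k' e \<gamma> A" for h A
    unfolding \<Phi>_def using xs assms(3) by (intro sketch_row_cong) (auto simp: map_of_zip_map)
  have "DPFMPS_row K H \<gamma> e c k' X =
      distr (K \<Otimes>\<^sub>M measure_pmf (Pi_pmf {..<k'} 0 (\<lambda>_. alpha_p_pmf e \<gamma>))) (count_space UNIV)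
        (\<lambda>(\<zeta>, A). \<Phi> (map (H \<zeta>) xs) A)"
    by (simp add: DPFMPS_row_def \<Phi>_map sketch_row_def DPFM_def)
  also have "\<dots> = measure_pmf (map_pmf (\<lambda>(ys, A). \<Phi> ys A)
      (pair_pmf (map_pmf (\<lambda>h. map h xs) (Pi_pmf D 0 (\<lambda>_. geom_pos \<gamma>)))
                (Pi_pmf {..<k'} 0 (\<lambda>_. alpha_p_pmf e \<gamma>))))"
    using ideal_geo_hash_values[OF hash xs(1)] xs(2) by (intro distr_pair_measure_pmf) auto
  also have "\<dots> = measure_pmf (map_pmf (\<lambda>(h, A). sketch_row h X c k' e \<gamma> A)
      (pair_pmf (Pi_pmf D 0 (\<lambda>_. geom_pos \<gamma>)) (Pi_pmf {..<k'} 0 (\<lambda>_. alpha_p_pmf e \<gamma>))))"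
    by (simp add: pair_map_pmf1 map_pmf_comp \<Phi>_map case_prod_unfold apfst_def map_prod_def)
  finally show ?thesis .
qed

lemma nearest_less:
  assumes "k' \<ge> 1"
  shows "nearest c k' x < k'"
proof -
  obtain a where "is_arg_min (\<lambda>j. (norm (x - c j))\<^sup>2) (\<lambda>j. j \<in> {..<k'}) a"
    using ex_is_arg_min_if_finite[of "{..<k'}"] assms by fastforce
  then have "a < k' \<and> (\<forall>j<k'. (norm (x - c a))\<^sup>2 \<le> (norm (x - c j))\<^sup>2)"
    by (simp add: is_arg_min_linorder)
  then show ?thesis
    unfolding nearest_def by (rule LeastI2) simp
qed

lemma part_set_fun_upd:
  assumes "u \<notin> dom X"
  shows "part_set (X(u \<mapsto> r)) c k' a =
    (if a = nearest c k' r then insert u (part_set X c k' a) else part_set X c k' a)"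
  using assms by (auto simp: part_set_def)

lemma alpha_min_le_sketch_row_nth:
  "a < k' \<Longrightarrow> alpha_min \<gamma> e \<le> sketch_row h X c k' e \<gamma> A ! a"
  by (simp add: sketch_row_def DPFM_def)

lemma raise_entry_raise_entry:
  "a < length L \<Longrightarrow> raise_entry a (raise_entry a L v) w = raise_entry a L (max v w)"
  by (simp add: raise_entry_def max.assoc max.left_commute)

lemma sketch_row_fun_upd_noise:
  assumes "a < k'"
  shows "sketch_row h X c k' e \<gamma> (A(a := v)) = raise_entry a (sketch_row h X c k' e \<gamma> (A(a := 0))) v"
  using assms
  by (intro nth_equalityI) (auto simp: sketch_row_def raise_entry_def nth_list_update DPFM_def max_def)

lemma sketch_row_add_user:
  assumes "finite (dom X)" "u \<notin> dom X" "a = nearest c k' r" "a < k'"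
  shows "sketch_row (h(u := w)) (X(u \<mapsto> r)) c k' e \<gamma> A = raise_entry a (sketch_row h X c k' e \<gamma> A) w"
proof -
  have "sketch_row (h(u := w)) (X(u \<mapsto> r)) c k' e \<gamma> A ! b = raise_entry a (sketch_row h X c k' e \<gamma> A) w ! b"
    if "b < k'" for b
  proof -
    have fin: "finite (part_set X c k' b)" and new: "u \<notin> part_set X c k' b"
      using assms(1,2) by (auto simp: part_set_def intro: finite_subset[of _ "dom X"])
    have "insert 0 ((h(u := w)) ` insert u (part_set X c k' b)) = insert w (insert 0 (h ` part_set X c k' b))"
      using new by auto
    then have max_new: "Max (insert 0 ((h(u := w)) ` insert u (part_set X c k' b))) =
        max w (Max (insert 0 (h ` part_set X c k' b)))"
      using fin by (simp only:) (intro Max_insert; simp)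
    show ?thesis
    proof (cases "b = a")
      case True
      then show ?thesis
        using that assms max_new
        by (simp add: sketch_row_def raise_entry_def DPFM_def part_set_fun_upd max.assoc max.left_commute)
    next
      case False
      have "DPFM (\<lambda>_::unit. h(u := w)) (part_set X c k' b) e \<gamma> () (A b) =
            DPFM (\<lambda>_::unit. h) (part_set X c k' b) e \<gamma> () (A b)"
        using new by (intro DPFM_cong) auto
      then show ?thesis
        using that False assms by (simp add: sketch_row_def raise_entry_def part_set_fun_upd)
    qed
  qed
  then show ?thesis
    by (intro nth_equalityI) (simp_all add: sketch_row_def raise_entry_def)
qed

lemma sketch_row_other_user_noise:
  assumes "u \<notin> dom X" "a < k'"
  shows "sketch_row (h(u := w)) X c k' e \<gamma> (A(a := v)) =
         raise_entry a (sketch_row h X c k' e \<gamma> (A(a := 0))) v"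
proof -
  have "sketch_row (h(u := w)) X c k' e \<gamma> (A(a := v)) = sketch_row h X c k' e \<gamma> (A(a := v))"
    using assms(1) by (intro sketch_row_cong) auto
  also have "\<dots> = raise_entry a (sketch_row h X c k' e \<gamma> (A(a := 0))) v"
    using assms(2) by (rule sketch_row_fun_upd_noise)
  finally show ?thesis .
qed

(* The hash value w of the new user acts on partition a as one more noise sample. *)
lemma sketch_row_add_user_noise:
  assumes "finite (dom X)" "u \<notin> dom X" "a = nearest c k' r" "a < k'"
  shows "sketch_row (h(u := w)) (X(u \<mapsto> r)) c k' e \<gamma> (A(a := v)) =
         raise_entry a (sketch_row h X c k' e \<gamma> (A(a := 0))) (max v w)"
proof -
  have "sketch_row (h(u := w)) (X(u \<mapsto> r)) c k' e \<gamma> (A(a := v)) =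
      raise_entry a (sketch_row h X c k' e \<gamma> (A(a := v))) w"
    using assms by (rule sketch_row_add_user)
  also have "\<dots> = raise_entry a (raise_entry a (sketch_row h X c k' e \<gamma> (A(a := 0))) v) w"
    by (simp only: sketch_row_fun_upd_noise[OF assms(4), of h X c e \<gamma> A v])
  also have "\<dots> = raise_entry a (sketch_row h X c k' e \<gamma> (A(a := 0))) (max v w)"
    using assms(4) by (simp add: raise_entry_raise_entry sketch_row_def)
  finally show ?thesis .
qed

lemma sketch_row_pmf_add_user:
  fixes e \<gamma> :: real
  assumes "finite (dom X)" "u \<notin> dom X" "a = nearest c k' r" "a < k'"
  defines "R \<equiv> pair_pmf (Pi_pmf (insert u (dom X)) 0 (\<lambda>_. geom_pos \<gamma>))
                       (Pi_pmf {..<k'} 0 (\<lambda>_. alpha_p_pmf e \<gamma>))"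
    and "Z \<equiv> pair_pmf (Pi_pmf (dom X) 0 (\<lambda>_. geom_pos \<gamma>))
                     (Pi_pmf ({..<k'} - {a}) 0 (\<lambda>_. alpha_p_pmf e \<gamma>))"
    and "L \<equiv> \<lambda>z. sketch_row (fst z) X c k' e \<gamma> ((snd z)(a := 0))"
  shows "map_pmf (\<lambda>(h, A). sketch_row h X c k' e \<gamma> A) R =
           bind_pmf Z (\<lambda>z. map_pmf (raise_entry a (L z)) (alpha_p_pmf e \<gamma>))"
    and "map_pmf (\<lambda>(h, A). sketch_row h (X(u \<mapsto> r)) c k' e \<gamma> A) R =
           bind_pmf Z (\<lambda>z. map_pmf (raise_entry a (L z)) (alpha_p_max_geom_pmf e \<gamma>))"
proof -
  have hashes: "Pi_pmf (insert u (dom X)) 0 (\<lambda>_. geom_pos \<gamma>) =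
      map_pmf (\<lambda>(w, h). h(u := w)) (pair_pmf (geom_pos \<gamma>) (Pi_pmf (dom X) 0 (\<lambda>_. geom_pos \<gamma>)))"
    using assms(1,2) by (intro Pi_pmf_insert) auto
  have split: "{..<k'} = insert a ({..<k'} - {a})"
    using assms(4) by auto
  have noise: "Pi_pmf {..<k'} 0 (\<lambda>_. alpha_p_pmf e \<gamma>) =
      map_pmf (\<lambda>(v, A). A(a := v))
        (pair_pmf (alpha_p_pmf e \<gamma>) (Pi_pmf ({..<k'} - {a}) 0 (\<lambda>_. alpha_p_pmf e \<gamma>)))"
    by (subst split, intro Pi_pmf_insert) auto
  note old = sketch_row_other_user_noise[OF assms(2,4)]
    and new = sketch_row_add_user_noise[OF assms(1-4)]
  show "map_pmf (\<lambda>(h, A). sketch_row h X c k' e \<gamma> A) R =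
      bind_pmf Z (\<lambda>z. map_pmf (raise_entry a (L z)) (alpha_p_pmf e \<gamma>))"
    unfolding R_def Z_def L_def hashes noise
    by (simp add: map_pmf_def pair_pmf_def bind_assoc_pmf bind_return_pmf old
        bind_commute_pmf[of "alpha_p_pmf e \<gamma>"])
  show "map_pmf (\<lambda>(h, A). sketch_row h (X(u \<mapsto> r)) c k' e \<gamma> A) R =
      bind_pmf Z (\<lambda>z. map_pmf (raise_entry a (L z)) (alpha_p_max_geom_pmf e \<gamma>))"
    unfolding R_def Z_def L_def hashes noise alpha_p_max_geom_pmf_def
    by (simp add: map_pmf_def pair_pmf_def bind_assoc_pmf bind_return_pmf new
        bind_commute_pmf[of "geom_pos \<gamma>"], simp add: bind_commute_pmf[of "alpha_p_pmf e \<gamma>"])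
qed

lemma DPFMPS_row_add_user_le:
  assumes hash: "ideal_geo_hash K H \<gamma>" and "\<gamma> > 0" "e > 0" "k' \<ge> 1"
    and fin: "finite (dom X)" and new: "u \<notin> dom X"
  shows "measure (DPFMPS_row K H \<gamma> e c k' (X(u \<mapsto> r))) S \<le> exp e * measure (DPFMPS_row K H \<gamma> e c k' X) S"
    and "measure (DPFMPS_row K H \<gamma> e c k' X) S \<le> exp e * measure (DPFMPS_row K H \<gamma> e c k' (X(u \<mapsto> r))) S"
proof -
  define a where "a = nearest c k' r"
  have a: "a < k'"
    unfolding a_def using assms(4) by (rule nearest_less)
  have D: "finite (insert u (dom X))"
    using fin by simp
  have "dom (X(u \<mapsto> r)) \<subseteq> insert u (dom X)"
    by simp
  note rows = DPFMPS_row_eq_sketch_row_pmf[OF hash D subset_insertI]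
    DPFMPS_row_eq_sketch_row_pmf[OF hash D this]
  note mixtures = sketch_row_pmf_add_user[OF fin new a_def a, where e=e and \<gamma>=\<gamma>]
  have floor: "alpha_min \<gamma> e \<le> sketch_row h X c k' e \<gamma> A ! a" for h A
    using a by (rule alpha_min_le_sketch_row_nth)
  show "measure (DPFMPS_row K H \<gamma> e c k' (X(u \<mapsto> r))) S \<le> exp e * measure (DPFMPS_row K H \<gamma> e c k' X) S"
    unfolding rows mixtures
    by (intro measure_bind_pmf_le measure_raise_entry_alpha_p_le(1) assms floor) simp
  show "measure (DPFMPS_row K H \<gamma> e c k' X) S \<le> exp e * measure (DPFMPS_row K H \<gamma> e c k' (X(u \<mapsto> r))) S"
    unfolding rows mixtures
    by (intro measure_bind_pmf_le measure_raise_entry_alpha_p_le(2) assms floor) simp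
qed

lemma eps_prime_pos:
  assumes "\<epsilon>2 > 0" "0 < \<delta>2" "\<delta>2 < 1" "M \<ge> 1"
  shows "eps_prime \<epsilon>2 \<delta>2 M > 0"
  using assms by (simp add: eps_prime_def)

lemma eps_DPI_fun_upd:
  assumes "\<And>X u r S. finite (dom X) \<Longrightarrow> u \<notin> dom X \<Longrightarrow>
      measure (A (X(u \<mapsto> r))) S \<le> exp \<epsilon> * measure (A X) S"
    and "\<And>X u r S. finite (dom X) \<Longrightarrow> u \<notin> dom X \<Longrightarrow>
      measure (A X) S \<le> exp \<epsilon> * measure (A (X(u \<mapsto> r))) S"
  shows "eps_DP A \<epsilon>"
  unfolding eps_DP_def neighbours_def using assms by blast

theorem lemma4p3:
  fixes Ks :: "nat \<Rightarrow> 'k measure" and H :: "'k \<Rightarrow> 'id \<Rightarrow> nat"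
    and c :: "nat \<Rightarrow> 'a::euclidean_space" and k' M i :: nat
    and \<gamma> \<epsilon>2 \<delta>2 :: real
  assumes "\<gamma> > 0" and "\<epsilon>2 > 0" and "0 < \<delta>2" and "\<delta>2 < 1" and "M \<ge> 1" and "k' \<ge> 1"
    and "\<forall>j\<in>{1..M}. ideal_geo_hash (Ks j) H \<gamma>"
    and "i \<in> {1..M}"
  shows "eps_DP (\<lambda>X :: 'id \<rightharpoonup> 'a. DPFMPS_row (Ks i) H \<gamma> (eps_prime \<epsilon>2 \<delta>2 M) c k' X)
                (eps_prime \<epsilon>2 \<delta>2 M)"
proof -
  have hash: "ideal_geo_hash (Ks i) H \<gamma>" and e: "eps_prime \<epsilon>2 \<delta>2 M > 0"
    using assms by (auto intro: eps_prime_pos)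
  show ?thesis
    using DPFMPS_row_add_user_le[OF hash assms(1) e assms(6)] by (intro eps_DPI_fun_upd)
qed

end
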